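(* Fix $b\in\mathbb{N}=\{1,2,3,\dots\}$ and let $f:\mathbb{N}\to\mathbb{C}$ be an arithmetic function satisfying \[ \frac{1}{N}\sum_{k=1}^{N}\frac{|(f\ast\mu)(k)|}{k}\to 0 \quad (N\to\infty), \] where $\mu$ is the Möbius function and $\ast$ is Dirichlet convolution. Define $\Lambda_f:\mathbb{N}\times\mathbb{N}\to\mathbb{C}$ by $\Lambda_f(r,s)=f(\gcd_b(r,s))$. Suppose the Dirichlet series $\zeta_f(s)=\sum_{n\ge1} f(n)n^{-s}$ converges absolutely at $s=b+1$. Then the mean value $M(\Lambda_f)$ exists and \[ M(\Lambda_f)=\frac{\zeta_f(b+1)}{\zeta(b+1)}, \] where $\zeta$ is the Riemann zeta function. Moreover, the displayed limit condition on $f\ast\mu$ holds, for example, whenever $f$ is a bounded function.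
   Context: For $b\in\mathbb{N}$ and $r,s\in\mathbb{N}$, the generalized greatest common divisor is $\gcd_b(r,s)=\max\{k\in\mathbb{N} : k\mid r \text{ and } k^b\mid s\}$. For $N\in\mathbb{N}$ let $T_N=\{(r,s)\in\mathbb{N}\times\mathbb{N} : 0<r,s\le N\}$. For a function $\Lambda:\mathbb{N}\times\mathbb{N}\to\mathbb{C}$, its mean value is $M(\Lambda)=\lim_{N\to\infty}\frac{1}{|T_N|}\sum_{(r,s)\in T_N}\Lambda(r,s)$ (when the limit exists). *)

theory Defs
  imports Complex_Main "HOL-Computational_Algebra.Computational_Algebra"
begin

definition gcd_b :: "nat \<Rightarrow> nat \<Rightarrow> nat \<Rightarrow> nat" where
  "gcd_b b r s = Max {k. k dvd r \<and> k ^ b dvd s}"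

definition moebius :: "nat \<Rightarrow> complex" where
  "moebius n = (if n = 0 \<or> \<not> squarefree n then 0
                else (-1) ^ card (prime_factors n))"

definition dirichlet_conv :: "(nat \<Rightarrow> complex) \<Rightarrow> (nat \<Rightarrow> complex) \<Rightarrow> nat \<Rightarrow> complex" where
  "dirichlet_conv f g n = (\<Sum>d \<in> {d. d dvd n}. f d * g (n div d))"

definition zeta_nat :: "nat \<Rightarrow> real" where
  "zeta_nat m = (\<Sum>n. 1 / real (Suc n) ^ m)"

definition dirichlet_series_at :: "(nat \<Rightarrow> complex) \<Rightarrow> nat \<Rightarrow> complex" where
  "dirichlet_series_at f m = (\<Sum>n. f (Suc n) / of_nat (Suc n) ^ m)"

definition has_mean_value :: "(nat \<Rightarrow> nat \<Rightarrow> complex) \<Rightarrow> complex \<Rightarrow> bool" where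
  "has_mean_value Lam L \<longleftrightarrow>
     ((\<lambda>N. (\<Sum>(r, s) \<in> {1..N} \<times> {1..N}. Lam r s) / of_nat (card ({1..N} \<times> {1..N})))
        \<longlonglongrightarrow> L)"

end

(*
  Moebius inversion writes f (gcd_b r s) as the sum of (f * mu)(d) over the d with d | r and
  d^b | s, so the sum of Lambda_f over T_N is the sum over d <= N of
  (f * mu)(d) floor(N/d) floor(N/d^b). Replacing the product of the floors by N^2 / d^(b+1) costs
  at most 2 N |(f * mu)(d)| / d per term, and after division by N^2 the total error is the
  Cesaro mean in the hypothesis. The main term tends to the value at b + 1 of the Dirichlet
  series of f * mu, which is zeta_f(b + 1) / zeta(b + 1) because the series of f is the product
  of the series of f * mu and of zeta, all converging absolutely. For bounded f one has
  |f * mu| <= C tau, and the sum of tau(k) / k over k <= N is at most (1 + ln N)^2.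
*)
theory Submission
  imports
    Defs
    "HOL-Analysis.Infinite_Sum"
    "HOL-Analysis.Summation_Tests"
    "HOL-Real_Asymp.Real_Asymp"
begin

section \<open>Moebius inversion\<close>

lemma sum_neg_one_power_card_Pow:
  assumes "finite A"
  shows "(\<Sum>X\<in>Pow A. (-1 :: 'a :: comm_ring_1) ^ card X) = (if A = {} then 1 else 0)"
  using prod_diff_conv_sum[OF assms, of "\<lambda>_. 1 :: 'a" "\<lambda>_. 1"] assms
  by (simp add: power_0_left)

lemma prime_factorization_prod_primes:
  fixes S :: "nat set"
  assumes "finite S" "\<And>p. p \<in> S \<Longrightarrow> prime p"
  shows "prime_factorization (\<Prod>S) = mset_set S"
proof -
  have "prime_factorization (\<Prod>S) = prime_factorization (prod_mset (mset_set S))"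
    by (simp add: prod_unfold_prod_mset)
  also have "\<dots> = mset_set S"
    using assms by (intro prime_factorization_prod_mset_primes) auto
  finally show ?thesis .
qed

lemma squarefree_prod_primes:
  fixes S :: "nat set"
  assumes "\<And>p. p \<in> S \<Longrightarrow> prime p"
  shows "squarefree (\<Prod>S)"
  using assms by (intro squarefree_prod_coprime) (auto simp: primes_coprime squarefree_prime)

lemma moebius_prod_primes:
  fixes S :: "nat set"
  assumes "finite S" "\<And>p. p \<in> S \<Longrightarrow> prime p"
  shows "moebius (\<Prod>S) = (-1) ^ card S"
proof -
  have "\<Prod>S \<noteq> 0"
    using assms by (auto dest: prime_gt_0_nat)
  then show ?thesis
    using assms squarefree_prod_primes[OF assms(2)] prime_factorization_prod_primes[OF assms]
    by (simp add: moebius_def)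
qed

lemma squarefree_divisors_eq_image_Pow:
  fixes n :: nat
  assumes "n > 0"
  shows "{d. d dvd n \<and> squarefree d} = Prod ` Pow (prime_factors n)"
proof safe
  fix d assume d: "d dvd n" "squarefree d"
  then have "d > 0"
    using assms by (auto intro: Nat.gr0I)
  then have "d = \<Prod>(prime_factors d)"
    using d(2) prod_prime_factors[of d] squarefree_factorial_semiring'[of d] by simp
  moreover have "prime_factors d \<in> Pow (prime_factors n)"
    using d \<open>d > 0\<close> assms by (auto simp: prime_factors_dvd intro: dvd_trans)
  ultimately show "d \<in> Prod ` Pow (prime_factors n)"
    by (rule image_eqI)
next
  fix S assume S: "S \<subseteq> prime_factors n"
  then have S_primes: "finite S" "\<And>p. p \<in> S \<Longrightarrow> prime p"
    by (auto intro: finite_subset)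
  then show "squarefree (\<Prod>S)"
    by (intro squarefree_prod_primes)
  have "\<Prod>S dvd \<Prod>(prime_factors n)"
    using S by (simp add: prod_dvd_prod_subset)
  also have "\<dots> dvd n"
  proof (rule prime_factorization_subset_imp_dvd)
    show "\<Prod>(prime_factors n) \<noteq> 0"
      by auto
    have "prime_factorization (\<Prod>(prime_factors n)) = mset_set (prime_factors n)"
      by (rule prime_factorization_prod_primes) auto
    then show "prime_factorization (\<Prod>(prime_factors n)) \<subseteq># prime_factorization n"
      by (simp add: mset_set_set_mset_msubset)
  qed
  finally show "\<Prod>S dvd n" .
qed

lemma sum_moebius_divisors:
  fixes n :: nat
  assumes "n > 0"
  shows "(\<Sum>d | d dvd n. moebius d) = (if n = 1 then 1 else 0)"
proof -
  have inj: "inj_on Prod (Pow (prime_factors n))"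
  proof (rule inj_on_inverseI[where g = prime_factors])
    fix S assume "S \<in> Pow (prime_factors n)"
    then have "finite S" "\<And>p. p \<in> S \<Longrightarrow> prime p"
      by (auto intro: finite_subset)
    then show "prime_factors (\<Prod>S) = S"
      by (simp add: prime_factorization_prod_primes)
  qed
  have "(\<Sum>d | d dvd n. moebius d) = (\<Sum>d | d dvd n \<and> squarefree d. moebius d)"
    using assms by (intro sum.mono_neutral_right) (auto simp: moebius_def)
  also have "\<dots> = (\<Sum>S\<in>Pow (prime_factors n). moebius (\<Prod>S))"
    using assms by (simp add: squarefree_divisors_eq_image_Pow sum.reindex[OF inj])
  also have "\<dots> = (\<Sum>S\<in>Pow (prime_factors n). (-1) ^ card S)"
    by (intro sum.cong refl moebius_prod_primes) (auto intro: finite_subset)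
  also have "\<dots> = (if n = 1 then 1 else 0)"
    using assms by (simp add: sum_neg_one_power_card_Pow prime_factorization_empty_iff)
  finally show ?thesis .
qed

lemma divisors_multiples_eq_image:
  fixes e n :: nat
  assumes "e dvd n"
  shows "{d. d dvd n \<and> e dvd d} = (\<lambda>m. e * m) ` {m. m dvd n div e}"
proof safe
  fix d assume "d dvd n" "e dvd d"
  moreover from this have "e dvd n"
    by (rule dvd_trans[rotated])
  ultimately have "d = e * (d div e)" "d div e dvd n div e"
    by simp_all
  then show "d \<in> (\<lambda>m. e * m) ` {m. m dvd n div e}"
    by blast
next
  fix m assume "m dvd n div e"
  then show "e * m dvd n"
    using assms by (metis dvd_mult_div_cancel mult_dvd_mono dvd_refl)
qed simp

lemma sum_divisors_dirichlet_conv_moebius: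
  fixes n :: nat
  assumes "n > 0"
  shows "(\<Sum>d | d dvd n. dirichlet_conv f moebius d) = f n"
proof -
  have "(\<Sum>d | d dvd n. dirichlet_conv f moebius d)
      = (\<Sum>d | d dvd n. \<Sum>e | e dvd n \<and> e dvd d. f e * moebius (d div e))"
    unfolding dirichlet_conv_def by (intro sum.cong refl) (auto intro: dvd_trans)
  also have "\<dots> = (\<Sum>e | e dvd n. \<Sum>d | d dvd n \<and> e dvd d. f e * moebius (d div e))"
    using assms sum.swap_restrict[of "{d. d dvd n}" "{e. e dvd n}"
        "\<lambda>d e. f e * moebius (d div e)" "\<lambda>d e. e dvd d"]
    by simp
  also have "\<dots> = (\<Sum>e | e dvd n. f e * (\<Sum>m | m dvd n div e. moebius m))"
  proof (intro sum.cong refl)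
    fix e assume "e \<in> {e. e dvd n}"
    then have "e dvd n" "e > 0"
      using assms by (auto intro: Nat.gr0I)
    then show "(\<Sum>d | d dvd n \<and> e dvd d. f e * moebius (d div e))
        = f e * (\<Sum>m | m dvd n div e. moebius m)"
      by (simp add: divisors_multiples_eq_image sum.reindex inj_on_def sum_distrib_left)
  qed
  also have "\<dots> = (\<Sum>e | e dvd n. if e = n then f e else 0)"
  proof (intro sum.cong refl)
    fix e assume "e \<in> {e. e dvd n}"
    then have "n div e > 0" "n div e = 1 \<longleftrightarrow> e = n"
      using assms by (auto simp: dvd_div_eq_0_iff)
    then show "f e * (\<Sum>m | m dvd n div e. moebius m) = (if e = n then f e else 0)"
      by (simp add: sum_moebius_divisors)
  qed
  also have "\<dots> = f n"
    using assms by simp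
  finally show ?thesis .
qed

lemma norm_dirichlet_conv_moebius_le:
  "norm (dirichlet_conv f moebius n) \<le> (\<Sum>d | d dvd n. norm (f d))"
proof -
  have "norm (dirichlet_conv f moebius n) \<le> (\<Sum>d | d dvd n. norm (f d * moebius (n div d)))"
    unfolding dirichlet_conv_def by (rule norm_sum)
  also have "\<dots> \<le> (\<Sum>d | d dvd n. norm (f d))"
    by (intro sum_mono) (simp add: moebius_def norm_mult norm_power mult_left_le)
  finally show ?thesis .
qed

section \<open>The generalized gcd and the counting identity\<close>

lemma lcm_power_nat: "lcm a b ^ n = lcm (a ^ n) (b ^ n :: nat)"
proof (cases "a = 0 \<or> b = 0")
  case True
  then show ?thesis
    by (cases n) auto
next
  case False
  have "gcd a b ^ n * lcm a b ^ n = (a * b) ^ n"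
    by (simp only: power_mult_distrib[symmetric] prod_gcd_lcm_nat[symmetric])
  also have "\<dots> = gcd (a ^ n) (b ^ n) * lcm (a ^ n) (b ^ n)"
    by (simp only: power_mult_distrib prod_gcd_lcm_nat[symmetric])
  finally show ?thesis
    using False by simp
qed

lemma finite_gcd_b_candidates:
  fixes r :: nat
  assumes "r > 0"
  shows "finite {k. k dvd r \<and> k ^ b dvd s}"
  using assms by (auto intro: finite_subset[of _ "{k. k dvd r}"])

lemma gcd_b_dvd:
  assumes "r > 0"
  shows "gcd_b b r s dvd r" "gcd_b b r s ^ b dvd s"
proof -
  have "gcd_b b r s \<in> {k. k dvd r \<and> k ^ b dvd s}"
    unfolding gcd_b_def using finite_gcd_b_candidates[OF assms]
    by (intro Max_in) (auto intro: exI[of _ 1])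
  then show "gcd_b b r s dvd r" "gcd_b b r s ^ b dvd s"
    by auto
qed

lemma dvd_gcd_b_iff:
  assumes "r > 0"
  shows "d dvd gcd_b b r s \<longleftrightarrow> d dvd r \<and> d ^ b dvd s"
proof
  assume "d dvd gcd_b b r s"
  then show "d dvd r \<and> d ^ b dvd s"
    using gcd_b_dvd[OF assms] by (meson dvd_power_same dvd_trans)
next
  assume d: "d dvd r \<and> d ^ b dvd s"
  let ?G = "gcd_b b r s" and ?l = "lcm d (gcd_b b r s)"
  have "?l dvd r" "?l ^ b dvd s"
    using d gcd_b_dvd[OF assms] by (simp_all add: lcm_power_nat)
  then have "?l \<le> ?G"
    unfolding gcd_b_def using finite_gcd_b_candidates[OF assms] by (intro Max_ge) auto
  moreover have "d > 0" "?G > 0"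
    using assms d gcd_b_dvd(1)[OF assms, of b s] by (auto intro: Nat.gr0I)
  then have "?G \<le> ?l"
    by (intro dvd_imp_le) (simp_all add: lcm_pos_nat)
  ultimately have "?l = ?G"
    by (rule order_antisym)
  then show "d dvd ?G"
    using dvd_lcm1[of d ?G] by simp
qed

lemma multiples_atLeastAtMost_eq:
  fixes e N :: nat
  assumes "e > 0"
  shows "{k \<in> {1..N}. e dvd k} = (\<lambda>m. e * m) ` {1..N div e}"
proof safe
  fix m assume "m \<in> {1..N div e}"
  then show "e * m \<in> {1..N}"
    using assms by (auto simp: less_eq_div_iff_mult_less_eq mult.commute)
next
  fix k assume "k \<in> {1..N}" "e dvd k"
  then obtain m where "k = e * m"
    by (elim dvdE)
  then show "k \<in> (\<lambda>m. e * m) ` {1..N div e}"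
    using assms \<open>k \<in> {1..N}\<close>
    by (auto simp: less_eq_div_iff_mult_less_eq mult.commute intro!: image_eqI[of k _ m] Nat.gr0I)
qed auto

lemma card_multiples_atLeastAtMost:
  fixes e N :: nat
  assumes "e > 0"
  shows "card {k \<in> {1..N}. e dvd k} = N div e"
  using assms by (subst multiples_atLeastAtMost_eq) (simp_all add: card_image inj_on_def)

lemma card_multiple_pairs_atLeastAtMost:
  fixes d e N :: nat
  assumes "d > 0" "e > 0"
  shows "card {p \<in> {1..N} \<times> {1..N}. d dvd fst p \<and> e dvd snd p} = (N div d) * (N div e)"
proof -
  have "{p \<in> {1..N} \<times> {1..N}. d dvd fst p \<and> e dvd snd p}
      = {r \<in> {1..N}. d dvd r} \<times> {s \<in> {1..N}. e dvd s}"
    by auto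
  then show ?thesis
    by (simp only: card_cartesian_product card_multiples_atLeastAtMost[OF assms(1)]
        card_multiples_atLeastAtMost[OF assms(2)])
qed

lemma sum_gcd_b_eq:
  fixes f :: "nat \<Rightarrow> complex"
  shows "(\<Sum>(r, s) \<in> {1..N} \<times> {1..N}. f (gcd_b b r s))
       = (\<Sum>d = 1..N. dirichlet_conv f moebius d * of_nat (N div d) * of_nat (N div d ^ b))"
proof -
  let ?g = "dirichlet_conv f moebius"
  have "(\<Sum>(r, s) \<in> {1..N} \<times> {1..N}. f (gcd_b b r s))
      = (\<Sum>(r, s) \<in> {1..N} \<times> {1..N}. \<Sum>d = 1..N. if d dvd r \<and> d ^ b dvd s then ?g d else 0)"
  proof (intro sum.cong refl, clarify)
    fix r s assume rs: "r \<in> {1..N}" "s \<in> {1..N}"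
    have "f (gcd_b b r s) = (\<Sum>d | d dvd gcd_b b r s. ?g d)"
      using rs gcd_b_dvd[of r b s]
      by (intro sum_divisors_dirichlet_conv_moebius[symmetric]) (auto intro: Nat.gr0I)
    also have "{d. d dvd gcd_b b r s} = {d \<in> {1..N}. d dvd r \<and> d ^ b dvd s}"
      using rs by (auto simp: dvd_gcd_b_iff dest: dvd_imp_le intro: Nat.gr0I)
    also have "(\<Sum>d \<in> \<dots>. ?g d) = (\<Sum>d = 1..N. if d dvd r \<and> d ^ b dvd s then ?g d else 0)"
      by (rule sum.inter_filter) simp
    finally show "f (gcd_b b r s) = (\<Sum>d = 1..N. if d dvd r \<and> d ^ b dvd s then ?g d else 0)" .
  qed
  also have "\<dots> = (\<Sum>d = 1..N. \<Sum>(r, s) \<in> {1..N} \<times> {1..N}. if d dvd r \<and> d ^ b dvd s then ?g d else 0)"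
    by (subst sum.swap) (simp add: case_prod_unfold)
  also have "\<dots> = (\<Sum>d = 1..N. ?g d * of_nat (N div d) * of_nat (N div d ^ b))"
  proof (intro sum.cong refl)
    fix d assume "d \<in> {1..N}"
    then have "d > 0" "d ^ b > 0"
      by simp_all
    have "(\<Sum>(r, s) \<in> {1..N} \<times> {1..N}. if d dvd r \<and> d ^ b dvd s then ?g d else 0)
        = (\<Sum>p \<in> {p \<in> {1..N} \<times> {1..N}. d dvd fst p \<and> d ^ b dvd snd p}. ?g d)"
      by (subst sum.inter_filter) (simp_all add: case_prod_unfold)
    also have "\<dots> = ?g d * of_nat (N div d) * of_nat (N div d ^ b)"
      by (simp only: sum_constant card_multiple_pairs_atLeastAtMost[OF \<open>d > 0\<close> \<open>d ^ b > 0\<close>])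
        (simp add: mult_ac)
    finally show "(\<Sum>(r, s) \<in> {1..N} \<times> {1..N}. if d dvd r \<and> d ^ b dvd s then ?g d else 0)
        = ?g d * of_nat (N div d) * of_nat (N div d ^ b)" .
  qed
  finally show ?thesis .
qed

section \<open>Dirichlet series\<close>

lemma has_sum_product:
  fixes \<alpha> :: "'a \<Rightarrow> complex" and \<beta> :: "'b \<Rightarrow> complex"
  assumes \<alpha>: "\<alpha> abs_summable_on A" and \<beta>: "\<beta> abs_summable_on B"
  shows "((\<lambda>(x, y). \<alpha> x * \<beta> y) has_sum (infsum \<alpha> A * infsum \<beta> B)) (A \<times> B)"
proof -
  have "(\<lambda>(x, y). \<alpha> x * \<beta> y) abs_summable_on A \<times> B"
  proof (subst abs_summable_on_Sigma_iff, intro conjI ballI)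
    fix x
    show "(\<lambda>y. case (x, y) of (x, y) \<Rightarrow> \<alpha> x * \<beta> y) abs_summable_on B"
      using summable_on_cmult_right[OF \<beta>, of "norm (\<alpha> x)"] by (simp add: norm_mult)
    show "(\<lambda>x. \<Sum>\<^sub>\<infinity>y\<in>B. norm (case (x, y) of (x, y) \<Rightarrow> \<alpha> x * \<beta> y)) abs_summable_on A"
      using summable_on_cmult_left[OF \<alpha>, of "\<Sum>\<^sub>\<infinity>y\<in>B. norm (\<beta> y)"]
      by (simp add: norm_mult infsum_cmult_right' infsum_nonneg)
  qed
  then have summable: "(\<lambda>(x, y). \<alpha> x * \<beta> y) summable_on A \<times> B"
    by (rule abs_summable_summable)
  have "infsum (\<lambda>(x, y). \<alpha> x * \<beta> y) (A \<times> B) = (\<Sum>\<^sub>\<infinity>x\<in>A. \<Sum>\<^sub>\<infinity>y\<in>B. \<alpha> x * \<beta> y)"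
    using infsum_Sigma_banach[OF summable] by simp
  also have "\<dots> = infsum \<alpha> A * infsum \<beta> B"
    by (simp add: infsum_cmult_right' infsum_cmult_left')
  finally show ?thesis
    using summable by (metis has_sum_infsum)
qed

lemma has_sum_dirichlet_conv_pairs:
  fixes \<alpha> \<beta> :: "nat \<Rightarrow> complex"
  assumes "\<alpha> 0 = 0" "\<beta> 0 = 0"
  shows "((\<lambda>(d, m). \<alpha> d * \<beta> m) has_sum dirichlet_conv \<alpha> \<beta> n) {(d, m). d * m = n}"
proof (cases "n = 0")
  case True
  \<comment> \<open>The divisor set of 0 is infinite, so the finite sum defining the convolution is 0.\<close>
  have "dirichlet_conv \<alpha> \<beta> 0 = 0"
    by (simp add: dirichlet_conv_def)
  moreover have "((\<lambda>(d, m). \<alpha> d * \<beta> m) has_sum 0) {(d, m). d * m = 0}"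
    using assms by (intro has_sum_0) auto
  ultimately show ?thesis
    using True by simp
next
  case False
  have "dirichlet_conv \<alpha> \<beta> n = (\<Sum>(d, m) \<in> {(d, m). d * m = n}. \<alpha> d * \<beta> m)"
    unfolding dirichlet_conv_def
  proof (rule sum.reindex_bij_witness[where i = fst and j = "\<lambda>d. (d, n div d)"])
    fix p assume "p \<in> {(d, m). d * m = n}"
    then show "(fst p, n div fst p) = p" "fst p \<in> {d. d dvd n}"
      using False by auto
  qed auto
  moreover have "finite {(d, m). d * m = n}"
  proof (rule finite_subset)
    show "{(d, m). d * m = n} \<subseteq> {d. d dvd n} \<times> {m. m dvd n}"
      by auto
    show "finite ({d. d dvd n} \<times> {m. m dvd n})"
      using False by simp
  qed
  ultimately show ?thesis
    by simp
qed

lemma has_sum_dirichlet_conv: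
  fixes \<alpha> \<beta> :: "nat \<Rightarrow> complex"
  assumes \<alpha>: "\<alpha> abs_summable_on UNIV" and \<beta>: "\<beta> abs_summable_on UNIV"
    and "\<alpha> 0 = 0" "\<beta> 0 = 0"
  shows "(dirichlet_conv \<alpha> \<beta> has_sum (infsum \<alpha> UNIV * infsum \<beta> UNIV)) UNIV"
proof (rule has_sum_Sigma')
  let ?h = "\<lambda>(d, m). (d * m, (d, m))" and ?f = "\<lambda>(n, d, m). \<alpha> d * \<beta> m"
  have image_h: "?h ` (UNIV \<times> UNIV) = Sigma UNIV (\<lambda>n. {(d, m). d * m = n})"
    by auto
  have "inj_on ?h (UNIV \<times> UNIV)"
    by (auto simp: inj_on_def)
  moreover have "((?f \<circ> ?h) has_sum (infsum \<alpha> UNIV * infsum \<beta> UNIV)) (UNIV \<times> UNIV)"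
    using has_sum_product[OF \<alpha> \<beta>] by (simp add: o_def case_prod_unfold)
  ultimately have "(?f has_sum (infsum \<alpha> UNIV * infsum \<beta> UNIV)) (?h ` (UNIV \<times> UNIV))"
    using has_sum_reindex by blast
  then show "(?f has_sum (infsum \<alpha> UNIV * infsum \<beta> UNIV)) (Sigma UNIV (\<lambda>n. {(d, m). d * m = n}))"
    by (simp only: image_h)
next
  fix n :: nat
  show "((\<lambda>y. case (n, y) of (n, d, m) \<Rightarrow> \<alpha> d * \<beta> m) has_sum dirichlet_conv \<alpha> \<beta> n)
      {(d, m). d * m = n}"
    using has_sum_dirichlet_conv_pairs[of \<alpha> \<beta> n, OF assms(3,4)] by simp
qed

lemma dirichlet_conv_divide_power:
  fixes \<alpha> \<beta> :: "nat \<Rightarrow> complex"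
  shows "dirichlet_conv (\<lambda>n. \<alpha> n / of_nat n ^ p) (\<lambda>n. \<beta> n / of_nat n ^ p) n
       = dirichlet_conv \<alpha> \<beta> n / of_nat n ^ p"
proof (cases "n = 0")
  case False
  have "of_nat n ^ p = (of_nat d ^ p * of_nat (n div d) ^ p :: complex)" if "d dvd n" for d
    using that by (simp flip: power_mult_distrib of_nat_mult)
  then show ?thesis
    unfolding dirichlet_conv_def sum_divide_distrib by (intro sum.cong refl) simp
qed (simp add: dirichlet_conv_def)

lemma has_sum_imp_sums_Suc:
  fixes h :: "nat \<Rightarrow> 'a :: real_normed_vector"
  assumes "(h has_sum S) UNIV" "h 0 = 0"
  shows "(\<lambda>n. h (Suc n)) sums S"
  using has_sum_imp_sums[OF assms(1)] assms(2) by (simp add: sums_Suc_iff)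

lemma abs_summable_divide_power:
  fixes f :: "nat \<Rightarrow> complex"
  assumes "summable (\<lambda>n. norm (f (Suc n)) / real (Suc n) ^ p)"
  shows "(\<lambda>n. f n / of_nat n ^ p) abs_summable_on UNIV"
proof -
  have norm_eq: "norm (f n / of_nat n ^ p) = norm (f n) / real n ^ p" for n
    by (simp add: norm_divide norm_power)
  have "summable (\<lambda>n. norm (f n / of_nat n ^ p))"
    using assms by (subst summable_Suc_iff[symmetric]) (simp only: norm_eq)
  then show ?thesis
    by (simp add: summable_on_UNIV_nonneg_real_iff)
qed

lemma abs_summable_inverse_power:
  assumes "p \<ge> 2"
  shows "(\<lambda>n. 1 / of_nat n ^ p :: complex) abs_summable_on UNIV"
  using assms inverse_power_summable[of p, THEN summable_Suc_iff[THEN iffD2]]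
  by (intro abs_summable_divide_power) (simp_all add: divide_inverse)

lemma zeta_nat_eq_infsum:
  assumes "p \<ge> 2"
  shows "complex_of_real (zeta_nat p) = (\<Sum>\<^sub>\<infinity>n. 1 / of_nat n ^ p)"
proof -
  have "((\<lambda>n. 1 / of_nat n ^ p :: complex) has_sum (\<Sum>\<^sub>\<infinity>n. 1 / of_nat n ^ p)) UNIV"
    using abs_summable_summable[OF abs_summable_inverse_power[OF assms]] by simp
  then have "(\<lambda>n. 1 / of_nat (Suc n) ^ p :: complex) sums (\<Sum>\<^sub>\<infinity>n. 1 / of_nat n ^ p)"
    using assms by (intro has_sum_imp_sums_Suc) auto
  moreover have "(\<lambda>n. complex_of_real (1 / real (Suc n) ^ p)) sums complex_of_real (zeta_nat p)"
    unfolding zeta_nat_def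
    using assms inverse_power_summable[of p, THEN summable_Suc_iff[THEN iffD2]]
    by (intro sums_of_real summable_sums) (simp add: divide_inverse)
  ultimately show ?thesis
    by (simp add: sums_unique2)
qed

lemma zeta_nat_pos:
  assumes "p \<ge> 2"
  shows "zeta_nat p > 0"
  unfolding zeta_nat_def
  using assms inverse_power_summable[of p, THEN summable_Suc_iff[THEN iffD2]]
  by (intro suminf_pos) (auto simp: divide_inverse)

lemma dirichlet_series_at_eqI:
  assumes "p > 0" "((\<lambda>n. f n / of_nat n ^ p) has_sum S) UNIV"
  shows "dirichlet_series_at f p = S"
  using has_sum_imp_sums_Suc[OF assms(2)] assms(1)
  unfolding dirichlet_series_at_def by (simp add: sums_iff)

lemma dirichlet_conv_moebius_divide_power_one:
  assumes "p > 0"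
  shows "dirichlet_conv (\<lambda>n. dirichlet_conv f moebius n / of_nat n ^ p) (\<lambda>n. 1 / of_nat n ^ p) n
       = f n / of_nat n ^ p"
proof (cases "n = 0")
  case False
  then show ?thesis
    unfolding dirichlet_conv_divide_power[where \<beta> = "\<lambda>_. 1", simplified]
    by (simp add: dirichlet_conv_def[of _ "\<lambda>_. 1"] sum_divisors_dirichlet_conv_moebius)
qed (use assms in \<open>simp add: dirichlet_conv_def\<close>)

lemma abs_summable_dirichlet_conv_moebius_divide_power:
  fixes f :: "nat \<Rightarrow> complex"
  assumes p: "p \<ge> 2" and summable: "summable (\<lambda>n. norm (f (Suc n)) / real (Suc n) ^ p)"
  shows "(\<lambda>n. dirichlet_conv f moebius n / of_nat n ^ p) abs_summable_on UNIV"
proof (rule abs_summable_on_comparison_test)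
  \<comment> \<open>Since \<open>|\<mu>| \<le> 1\<close>, the series is dominated by the Dirichlet product of \<open>|f|\<close> and \<open>\<zeta>\<close>.\<close>
  define F where "F n = complex_of_real (norm (f n)) / of_nat n ^ p" for n
  define w :: "nat \<Rightarrow> complex" where "w n = 1 / of_nat n ^ p" for n
  have "F abs_summable_on UNIV"
    unfolding F_def using summable by (intro abs_summable_divide_power) simp
  moreover have "w abs_summable_on UNIV"
    unfolding w_def using p by (rule abs_summable_inverse_power)
  ultimately have "dirichlet_conv F w summable_on UNIV"
    using has_sum_dirichlet_conv[of F w] p by (auto simp: F_def w_def summable_on_def)
  then show "dirichlet_conv F w abs_summable_on UNIV"
    by (simp add: summable_on_iff_abs_summable_on_complex)
  fix n
  have "dirichlet_conv F w n = complex_of_real (\<Sum>d | d dvd n. norm (f d)) / of_nat n ^ p"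
    unfolding F_def w_def dirichlet_conv_divide_power[where \<beta> = "\<lambda>_. 1", simplified]
    by (simp add: dirichlet_conv_def)
  then have "norm (dirichlet_conv F w n) = (\<Sum>d | d dvd n. norm (f d)) / real n ^ p"
    by (simp add: norm_divide norm_power sum_nonneg del: of_real_sum)
  then show "norm (dirichlet_conv f moebius n / of_nat n ^ p) \<le> norm (dirichlet_conv F w n)"
    using norm_dirichlet_conv_moebius_le[of f n] by (simp add: norm_divide norm_power divide_right_mono)
qed

lemma dirichlet_conv_moebius_sums:
  fixes f :: "nat \<Rightarrow> complex"
  assumes p: "p \<ge> 2" and summable: "summable (\<lambda>n. norm (f (Suc n)) / real (Suc n) ^ p)"
  shows "(\<lambda>n. dirichlet_conv f moebius (Suc n) / of_nat (Suc n) ^ p)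
           sums (dirichlet_series_at f p / complex_of_real (zeta_nat p))"
proof -
  define G where "G n = dirichlet_conv f moebius n / of_nat n ^ p" for n
  define w :: "nat \<Rightarrow> complex" where "w n = 1 / of_nat n ^ p" for n
  have G: "G abs_summable_on UNIV"
    unfolding G_def using p summable by (rule abs_summable_dirichlet_conv_moebius_divide_power)
  have w: "w abs_summable_on UNIV"
    unfolding w_def using p by (rule abs_summable_inverse_power)
  have "dirichlet_conv G w = (\<lambda>n. f n / of_nat n ^ p)"
    unfolding G_def w_def using p by (intro ext dirichlet_conv_moebius_divide_power_one) simp
  moreover have zero: "G 0 = 0" "w 0 = 0"
    using p by (simp_all add: G_def w_def)
  ultimately have "((\<lambda>n. f n / of_nat n ^ p) has_sum (infsum G UNIV * infsum w UNIV)) UNIV"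
    using has_sum_dirichlet_conv[OF G w] by simp
  then have "dirichlet_series_at f p = infsum G UNIV * infsum w UNIV"
    using p by (intro dirichlet_series_at_eqI) simp_all
  moreover have "infsum w UNIV = complex_of_real (zeta_nat p)"
    unfolding w_def using p by (rule zeta_nat_eq_infsum[symmetric])
  moreover have "zeta_nat p \<noteq> 0"
    using zeta_nat_pos[OF p] by simp
  ultimately have "dirichlet_series_at f p / complex_of_real (zeta_nat p) = infsum G UNIV"
    by simp
  moreover have "(\<lambda>n. G (Suc n)) sums infsum G UNIV"
    using abs_summable_summable[OF G] zero(1) by (intro has_sum_imp_sums_Suc) simp_all
  ultimately show ?thesis
    by (simp add: G_def)
qed

section \<open>The mean value\<close>

lemma real_div_nat_bounds:
  fixes N d :: nat
  shows "real (N div d) \<le> real N / real d" "real N / real d < real (N div d) + 1"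
proof -
  have "real (N div d) = of_int \<lfloor>real N / real d\<rfloor>"
    by (simp add: floor_divide_of_nat_eq)
  then show "real (N div d) \<le> real N / real d" "real N / real d < real (N div d) + 1"
    by simp_all
qed

lemma abs_div_times_div_minus_le:
  fixes N d e :: nat
  assumes "0 < d" "d \<le> e"
  shows "\<bar>real (N div d) * real (N div e) - real N / real d * (real N / real e)\<bar> \<le> 2 * (real N / real d)"
proof -
  define x y where "x = real N / real d" and "y = real N / real e"
  define q r where "q = real (N div d)" and "r = real (N div e)"
  have q: "0 \<le> q" "q \<le> x" "x - q \<le> 1" and r: "0 \<le> r" "r \<le> y" "y - r \<le> 1"
    using real_div_nat_bounds[of N d] real_div_nat_bounds[of N e]
    unfolding x_def y_def q_def r_def by linarith+
  have "y \<le> x"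
    using assms unfolding x_def y_def by (simp add: frac_le)
  have "q * r \<le> x * y"
    using q r by (intro mult_mono) auto
  moreover have "(x - q) * y \<le> y" "q * (y - r) \<le> q"
    using q r by (auto intro: mult_left_le_one_le mult_left_le)
  moreover have "x * y - q * r = (x - q) * y + q * (y - r)"
    by (simp add: algebra_simps)
  ultimately have "\<bar>q * r - x * y\<bar> \<le> 2 * x"
    using q \<open>y \<le> x\<close> by linarith
  then show ?thesis
    unfolding x_def y_def q_def r_def .
qed

lemma norm_div_times_div_approx_le:
  fixes c :: complex and N d b :: nat
  assumes "N > 0" "d > 0" "b \<ge> 1"
  shows "norm (c * of_nat (N div d) * of_nat (N div d ^ b) / of_nat (N * N) - c / of_nat d ^ (b + 1))
         \<le> 2 * (norm c / real d) / real N"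
proof -
  define D where "D = real (N div d) * real (N div d ^ b) - real N / real d * (real N / real (d ^ b))"
  have "d \<le> d ^ b"
    using assms by (simp add: self_le_power)
  then have D: "\<bar>D\<bar> \<le> 2 * (real N / real d)"
    unfolding D_def using assms by (intro abs_div_times_div_minus_le) auto
  have eq: "c * of_nat (N div d) * of_nat (N div d ^ b) / of_nat (N * N) - c / of_nat d ^ (b + 1)
      = c * complex_of_real (D / (real N * real N))"
    using assms unfolding D_def by (simp add: field_simps)
  have "norm (c * of_nat (N div d) * of_nat (N div d ^ b) / of_nat (N * N) - c / of_nat d ^ (b + 1))
      = norm c * (\<bar>D\<bar> / (real N * real N))"
    unfolding eq norm_mult norm_of_real by simp
  also have "\<dots> \<le> norm c * (2 * (real N / real d) / (real N * real N))"
    using D by (intro mult_left_mono divide_right_mono) auto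
  also have "\<dots> = 2 * (norm c / real d) / real N"
    using assms by (simp add: field_simps)
  finally show ?thesis .
qed

lemma tendsto_mean_floor_sum:
  fixes g :: "nat \<Rightarrow> complex"
  assumes b: "b \<ge> 1"
    and cesaro: "(\<lambda>N. (\<Sum>k = 1..N. norm (g k) / real k) / real N) \<longlonglongrightarrow> 0"
    and series: "(\<lambda>N. \<Sum>d = 1..N. g d / of_nat d ^ (b + 1)) \<longlonglongrightarrow> L"
  shows "(\<lambda>N. (\<Sum>d = 1..N. g d * of_nat (N div d) * of_nat (N div d ^ b)) / of_nat (N * N)) \<longlonglongrightarrow> L"
proof -
  define M where "M N = (\<Sum>d = 1..N. g d * of_nat (N div d) * of_nat (N div d ^ b)) / of_nat (N * N)" for N
  define T where "T N = (\<Sum>d = 1..N. g d / of_nat d ^ (b + 1))" for N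
  have bound: "norm (M N - T N) \<le> 2 * ((\<Sum>k = 1..N. norm (g k) / real k) / real N)" if "N > 0" for N
  proof -
    have "norm (M N - T N) \<le> (\<Sum>d = 1..N.
        norm (g d * of_nat (N div d) * of_nat (N div d ^ b) / of_nat (N * N) - g d / of_nat d ^ (b + 1)))"
      unfolding M_def T_def sum_divide_distrib sum_subtractf[symmetric] by (rule norm_sum)
    also have "\<dots> \<le> (\<Sum>d = 1..N. 2 * (norm (g d) / real d) / real N)"
      using that b by (intro sum_mono norm_div_times_div_approx_le) auto
    also have "\<dots> = 2 * ((\<Sum>k = 1..N. norm (g k) / real k) / real N)"
      by (simp add: sum_distrib_left sum_divide_distrib)
    finally show ?thesis .
  qed
  have "(\<lambda>N. M N - T N) \<longlonglongrightarrow> 0"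
  proof (rule Lim_null_comparison)
    show "\<forall>\<^sub>F N in sequentially. norm (M N - T N) \<le> 2 * ((\<Sum>k = 1..N. norm (g k) / real k) / real N)"
      using eventually_gt_at_top[of 0] by eventually_elim (rule bound)
    show "(\<lambda>N. 2 * ((\<Sum>k = 1..N. norm (g k) / real k) / real N)) \<longlonglongrightarrow> 0"
      using tendsto_mult_right_zero[OF cesaro, of 2] .
  qed
  then have "(\<lambda>N. (M N - T N) + T N) \<longlonglongrightarrow> 0 + L"
    using series unfolding T_def by (intro tendsto_add)
  then show ?thesis
    by (simp add: M_def)
qed

section \<open>Bounded functions\<close>

lemma sum_inverse_le_one_plus_ln:
  fixes N :: nat
  assumes "N \<ge> 1"
  shows "(\<Sum>k = 1..N. 1 / real k) \<le> 1 + ln (real N)"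
  using assms
proof (induction N rule: dec_induct)
  case (step n)
  have "ln (real n / real (Suc n)) \<le> real n / real (Suc n) - 1"
    using step.hyps by (intro ln_le_minus_one) auto
  then have "1 / real (Suc n) \<le> ln (real (Suc n)) - ln (real n)"
    using step.hyps by (simp add: ln_divide_pos field_simps)
  then show ?case
    using step.IH by simp
qed simp

lemma sum_divisor_count_le:
  fixes N :: nat
  shows "(\<Sum>k = 1..N. real (card {d. d dvd k}) / real k) \<le> (\<Sum>d = 1..N. 1 / real d) ^ 2"
proof -
  have "(\<Sum>k = 1..N. real (card {d. d dvd k}) / real k)
      = (\<Sum>k = 1..N. \<Sum>d = 1..N. if d dvd k then 1 / real k else 0)"
  proof (intro sum.cong refl)
    fix k assume "k \<in> {1..N}"
    then have "{d. d dvd k} = {d \<in> {1..N}. d dvd k}"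
      by (auto dest: dvd_imp_le intro: Nat.gr0I)
    then show "real (card {d. d dvd k}) / real k = (\<Sum>d = 1..N. if d dvd k then 1 / real k else 0)"
      by (simp add: sum.inter_filter[symmetric])
  qed
  also have "\<dots> = (\<Sum>d = 1..N. \<Sum>k = 1..N. if d dvd k then 1 / real k else 0)"
    by (rule sum.swap)
  also have "\<dots> = (\<Sum>d = 1..N. \<Sum>m = 1..N div d. 1 / real d * (1 / real m))"
  proof (rule sum.cong[OF refl])
    fix d assume "d \<in> {1..N}"
    have "(\<Sum>k = 1..N. if d dvd k then 1 / real k else 0) = (\<Sum>k \<in> {k \<in> {1..N}. d dvd k}. 1 / real k)"
      by (rule sum.inter_filter[symmetric]) simp
    also have "\<dots> = (\<Sum>m = 1..N div d. 1 / real d * (1 / real m))"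
      using \<open>d \<in> {1..N}\<close> by (subst multiples_atLeastAtMost_eq) (simp_all add: sum.reindex inj_on_def)
    finally show "(\<Sum>k = 1..N. if d dvd k then 1 / real k else 0) = (\<Sum>m = 1..N div d. 1 / real d * (1 / real m))" .
  qed
  also have "\<dots> \<le> (\<Sum>d = 1..N. \<Sum>m = 1..N. 1 / real d * (1 / real m))"
    by (intro sum_mono sum_mono2) auto
  also have "\<dots> = (\<Sum>d = 1..N. 1 / real d) ^ 2"
    by (simp add: power2_eq_square sum_product)
  finally show ?thesis .
qed

lemma sum_norm_dirichlet_conv_moebius_le:
  fixes f :: "nat \<Rightarrow> complex"
  assumes C: "\<And>n. n \<ge> 1 \<Longrightarrow> norm (f n) \<le> C" and "N \<ge> 1"
  shows "(\<Sum>k = 1..N. norm (dirichlet_conv f moebius k) / real k) \<le> C * (1 + ln (real N)) ^ 2"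
proof -
  have "C \<ge> 0"
    using C[of 1] norm_ge_zero[of "f 1"] by linarith
  have "norm (dirichlet_conv f moebius k) \<le> C * real (card {d. d dvd k})" if "k \<in> {1..N}" for k
  proof -
    have "norm (dirichlet_conv f moebius k) \<le> (\<Sum>d | d dvd k. norm (f d))"
      by (rule norm_dirichlet_conv_moebius_le)
    also have "\<dots> \<le> (\<Sum>d | d dvd k. C)"
      using that by (intro sum_mono C) (auto intro: Nat.gr0I)
    finally show ?thesis
      by (simp add: mult.commute)
  qed
  then have "(\<Sum>k = 1..N. norm (dirichlet_conv f moebius k) / real k)
      \<le> (\<Sum>k = 1..N. C * (real (card {d. d dvd k}) / real k))"
    by (intro sum_mono) (simp add: divide_right_mono)
  also have "\<dots> \<le> C * (\<Sum>d = 1..N. 1 / real d) ^ 2"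
    unfolding sum_distrib_left[symmetric] using \<open>C \<ge> 0\<close>
    by (intro mult_left_mono sum_divisor_count_le)
  also have "\<dots> \<le> C * (1 + ln (real N)) ^ 2"
    using \<open>C \<ge> 0\<close> \<open>N \<ge> 1\<close>
    by (intro mult_left_mono power_mono sum_inverse_le_one_plus_ln) (auto intro: sum_nonneg)
  finally show ?thesis .
qed

lemma bounded_imp_mean_dirichlet_conv_moebius_tendsto_0:
  fixes f :: "nat \<Rightarrow> complex"
  assumes "\<exists>C. \<forall>n \<ge> 1. norm (f n) \<le> C"
  shows "(\<lambda>N. (\<Sum>k = 1..N. norm (dirichlet_conv f moebius k) / real k) / real N) \<longlonglongrightarrow> 0"
proof -
  obtain C where C: "\<And>n. n \<ge> 1 \<Longrightarrow> norm (f n) \<le> C"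
    using assms by blast
  have "\<forall>\<^sub>F N in sequentially.
      norm ((\<Sum>k = 1..N. norm (dirichlet_conv f moebius k) / real k) / real N)
        \<le> C * ((1 + ln (real N)) ^ 2 / real N)"
    using eventually_ge_at_top[of 1]
  proof eventually_elim
    case (elim N)
    then show ?case
      using sum_norm_dirichlet_conv_moebius_le[OF C elim]
      by (simp add: sum_nonneg divide_right_mono)
  qed
  moreover have "(\<lambda>N::nat. (1 + ln (real N)) ^ 2 / real N) \<longlonglongrightarrow> 0"
    by real_asymp
  ultimately show ?thesis
    by (rule Lim_null_comparison[OF _ tendsto_mult_right_zero])
qed

theorem mainTheorem1:
  fixes b :: nat
  assumes "b \<ge> 1"
  shows "(\<forall>f :: nat \<Rightarrow> complex.
           ((\<lambda>N. (\<Sum>k = 1..N. norm (dirichlet_conv f moebius k) / real k) / real N) \<longlonglongrightarrow> 0)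
           \<longrightarrow> summable (\<lambda>n. norm (f (Suc n)) / real (Suc n) ^ (b + 1))
           \<longrightarrow> has_mean_value (\<lambda>r s. f (gcd_b b r s))
                 (dirichlet_series_at f (b + 1) / complex_of_real (zeta_nat (b + 1))))
         \<and> (\<forall>f :: nat \<Rightarrow> complex. (\<exists>C. \<forall>n \<ge> 1. norm (f n) \<le> C) \<longrightarrow>
           ((\<lambda>N. (\<Sum>k = 1..N. norm (dirichlet_conv f moebius k) / real k) / real N) \<longlonglongrightarrow> 0))"
proof (intro conjI allI impI)
  fix f :: "nat \<Rightarrow> complex"
  assume cesaro: "(\<lambda>N. (\<Sum>k = 1..N. norm (dirichlet_conv f moebius k) / real k) / real N) \<longlonglongrightarrow> 0"
    and summable: "summable (\<lambda>n. norm (f (Suc n)) / real (Suc n) ^ (b + 1))"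
  have "(\<lambda>n. dirichlet_conv f moebius (Suc n) / of_nat (Suc n) ^ (b + 1))
      sums (dirichlet_series_at f (b + 1) / complex_of_real (zeta_nat (b + 1)))"
    using assms summable by (intro dirichlet_conv_moebius_sums) auto
  then have "(\<lambda>N. \<Sum>d = 1..N. dirichlet_conv f moebius d / of_nat d ^ (b + 1))
      \<longlonglongrightarrow> dirichlet_series_at f (b + 1) / complex_of_real (zeta_nat (b + 1))"
    by (simp add: sums_def sum.atLeast1_atMost_eq)
  then show "has_mean_value (\<lambda>r s. f (gcd_b b r s))
      (dirichlet_series_at f (b + 1) / complex_of_real (zeta_nat (b + 1)))"
    unfolding has_mean_value_def sum_gcd_b_eq card_cartesian_product card_atLeastAtMost
    using tendsto_mean_floor_sum[OF assms cesaro] by simp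
qed (rule bounded_imp_mean_dirichlet_conv_moebius_tendsto_0)

end
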